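(* Let $A_1,A_2\in\mathbb{R}^{2\times2}$ and suppose $A_1$ has two distinct eigenvalues. Then there exists $T\in GL(2,\mathbb{R})$ such that: (i) if $A_1$ has real eigenvalues and $\det[A_1,A_2]\ne0$, then $TA_1T^{-1}=\begin{pmatrix}\lambda_1&0\\0&\lambda_2\end{pmatrix}$ and $TA_2T^{-1}=\begin{pmatrix}s_{21}&t_2\\t_2&s_{22}\end{pmatrix}$ or $\begin{pmatrix}s_{21}&-t_2\\t_2&s_{22}\end{pmatrix}$ for some $\lambda_j,s_{2j},t_2\in\mathbb{R}$, $j=1,2$; (ii) if $A_1$ has non-real eigenvalues, then $TA_1T^{-1}=\begin{pmatrix}s_1&-t_1\\t_1&s_1\end{pmatrix}$ and $TA_2T^{-1}=\begin{pmatrix}s_{21}&-t_2\\t_2&s_{22}\end{pmatrix}$ for some $s_1,t_1,s_{21},s_{22},t_2\in\mathbb{R}$.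
   Context: $[A,B]=AB-BA$. *)

theory Defs
  imports "HOL-Analysis.Analysis"
begin

definition cmat :: "real^'n^'n \<Rightarrow> complex^'n^'n" where
  "cmat A = (\<chi> i j. complex_of_real (A $ i $ j))"

definition eigenvalues :: "real^'n^'n \<Rightarrow> complex set" where
  "eigenvalues A = {\<mu>. det (mat \<mu> - cmat A) = 0}"

definition commutator :: "real^'n^'n \<Rightarrow> real^'n^'n \<Rightarrow> real^'n^'n" where
  "commutator A B = A ** B - B ** A"

definition mat2 :: "real \<Rightarrow> real \<Rightarrow> real \<Rightarrow> real \<Rightarrow> real^2^2" where
  "mat2 a b c d = vector [vector [a, b], vector [c, d]]"

end

theory Submission
  imports Defs
begin

text \<open>
  Whether the eigenvalues of \<open>A1 = mat2 a b c d\<close> are real is decided by the sign of the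
  discriminant \<open>(a - d)\<^sup>2 + 4 b c\<close>, which is nonzero because they are distinct.
  If it is positive, A1 is diagonalizable over the reals; conjugating further by \<open>diag(x, 1)\<close>
  keeps A1 diagonal and turns the off-diagonal entries q, u of A2 into x q and u / x. Since
  \<open>det [A1, A2]\<close> is a nonzero multiple of q u, x can be chosen with \<open>|x q| = |u / x|\<close>.
  If it is negative, A1 is similar to \<open>s I + t J\<close> with J the quarter turn. Every invertible
  \<open>x I + y J\<close> commutes with it, and conjugating by it rotates the symmetric traceless part of
  A2 by twice its argument, which can be chosen to make that part diagonal.
\<close>

lemma matrix_inv_right:
  fixes A :: "'a::semiring_1^'n^'m"
  assumes "invertible A"
  shows "A ** matrix_inv A = mat 1"
  using assms unfolding invertible_def matrix_inv_def by (rule someI2_ex) auto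

lemma matrix_inv_left:
  fixes A :: "'a::semiring_1^'n^'m"
  assumes "invertible A"
  shows "matrix_inv A ** A = mat 1"
  using assms unfolding invertible_def matrix_inv_def by (rule someI2_ex) auto

lemma invertible_mat_1: "invertible (mat 1 :: 'a::semiring_1^'n^'n)"
  unfolding invertible_def by (metis matrix_mul_lid)

lemma conjugate_eq_iff:
  fixes T A B :: "'a::semiring_1^'n^'n"
  assumes "invertible T"
  shows "T ** A ** matrix_inv T = B \<longleftrightarrow> T ** A = B ** T"
  by (metis assms matrix_inv_left matrix_inv_right matrix_mul_assoc matrix_mul_rid)

lemma matrix_diff_ldistrib: "(A::'a::ring_1^'n^'m) ** (B - C) = A ** B - A ** C"
  by (vector matrix_matrix_mult_def sum_subtractf[symmetric] algebra_simps)

lemma matrix_diff_rdistrib: "((A::'a::ring_1^'n^'m) - B) ** C = A ** C - B ** C"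
  by (vector matrix_matrix_mult_def sum_subtractf[symmetric] algebra_simps)

lemma commutator_intertwine:
  fixes T A B A' B' :: "real^'n^'n"
  assumes "T ** A = A' ** T" "T ** B = B' ** T"
  shows "T ** commutator A B = commutator A' B' ** T"
proof -
  have "T ** (A ** B) = A' ** B' ** T" "T ** (B ** A) = B' ** A' ** T"
    by (metis assms matrix_mul_assoc)+
  then show ?thesis
    unfolding commutator_def by (simp add: matrix_diff_ldistrib matrix_diff_rdistrib)
qed

lemma det_intertwine:
  fixes T A B :: "'a::field^'n^'n"
  assumes "invertible T" "T ** A = B ** T"
  shows "det A = det B"
proof -
  have "det T * det A = det B * det T"
    by (metis assms(2) det_mul)
  then show ?thesis
    using assms(1) by (simp add: invertible_det_nz)
qed

lemma conjugate_pair_compose: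
  fixes T1 T2 A B D C C' :: "'a::semiring_1^'n^'n"
  assumes "invertible T1" "invertible T2"
    and "T1 ** A = D ** T1" "T1 ** B = C ** T1"
    and "T2 ** D = D ** T2" "T2 ** C = C' ** T2"
  shows "invertible (T2 ** T1) \<and> (T2 ** T1) ** A ** matrix_inv (T2 ** T1) = D \<and>
    (T2 ** T1) ** B ** matrix_inv (T2 ** T1) = C'"
proof -
  have "(T2 ** T1) ** A = D ** (T2 ** T1)" "(T2 ** T1) ** B = C' ** (T2 ** T1)"
    by (metis assms(3-6) matrix_mul_assoc)+
  moreover have "invertible (T2 ** T1)"
    by (rule invertible_mult[OF assms(2,1)])
  ultimately show ?thesis
    using conjugate_eq_iff by blast
qed

lemma mat2_nth [simp]:
  "mat2 a b c d $ 1 $ 1 = a" "mat2 a b c d $ 1 $ 2 = b"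
  "mat2 a b c d $ 2 $ 1 = c" "mat2 a b c d $ 2 $ 2 = d"
  by (simp_all add: mat2_def)

lemma mat2_cases:
  obtains a b c d where "(M::real^2^2) = mat2 a b c d"
proof
  show "M = mat2 (M$1$1) (M$1$2) (M$2$1) (M$2$2)"
    by (simp add: vec_eq_iff forall_2)
qed

lemma mat2_eq_iff: "mat2 a b c d = mat2 a' b' c' d' \<longleftrightarrow> a = a' \<and> b = b' \<and> c = c' \<and> d = d'"
  by (metis mat2_nth)

lemma mat2_mult [simp]:
  "mat2 a b c d ** mat2 e f g h = mat2 (a*e + b*g) (a*f + b*h) (c*e + d*g) (c*f + d*h)"
  by (simp add: vec_eq_iff forall_2 matrix_matrix_mult_def sum_2)

lemma mat2_diff [simp]: "mat2 a b c d - mat2 e f g h = mat2 (a - e) (b - f) (c - g) (d - h)"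
  by (simp add: vec_eq_iff forall_2)

lemma det_mat2 [simp]: "det (mat2 a b c d) = a*d - b*c"
  by (simp add: det_2)

lemma invertible_mat2_iff: "invertible (mat2 a b c d) \<longleftrightarrow> a*d - b*c \<noteq> 0"
  by (simp add: invertible_det_nz)

definition mat2_discr :: "real \<Rightarrow> real \<Rightarrow> real \<Rightarrow> real \<Rightarrow> real" where
  "mat2_discr a b c d = (a - d)^2 + 4*b*c"

lemma eigenvalues_mat2_iff:
  "\<mu> \<in> eigenvalues (mat2 a b c d) \<longleftrightarrow> (2*\<mu> - of_real (a + d))^2 = of_real (mat2_discr a b c d)"
proof -
  have "\<mu> \<in> eigenvalues (mat2 a b c d) \<longleftrightarrow> (\<mu> - of_real a) * (\<mu> - of_real d) - of_real b * of_real c = 0"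
    by (simp add: eigenvalues_def cmat_def mat_def det_2)
  also have "\<dots> \<longleftrightarrow> 4 * ((\<mu> - of_real a) * (\<mu> - of_real d) - of_real b * of_real c) = 0"
    by simp
  also have "4 * ((\<mu> - of_real a) * (\<mu> - of_real d) - of_real b * of_real c)
      = (2*\<mu> - of_real (a + d))^2 - of_real (mat2_discr a b c d)"
    by (simp add: mat2_discr_def algebra_simps power2_eq_square)
  finally show ?thesis
    by simp
qed

lemma eigenvalues_mat2_discr_zero:
  assumes "mat2_discr a b c d = 0"
  shows "eigenvalues (mat2 a b c d) = {of_real ((a + d) / 2)}"
  using assms by (auto simp: eigenvalues_mat2_iff field_simps)

lemma eigenvalues_mat2_real:
  assumes "mat2_discr a b c d \<ge> 0"
  shows "eigenvalues (mat2 a b c d) \<subseteq> \<real>"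
proof
  fix \<mu> assume "\<mu> \<in> eigenvalues (mat2 a b c d)"
  define r where "r = sqrt (mat2_discr a b c d)"
  have "(2*\<mu> - of_real (a + d))^2 = (of_real r)^2"
    using \<open>\<mu> \<in> _\<close> assms by (simp add: eigenvalues_mat2_iff r_def flip: of_real_power)
  then have "2 * \<mu> = of_real (a + d + r) \<or> 2 * \<mu> = of_real (a + d - r)"
    unfolding power2_eq_iff by (auto simp: algebra_simps)
  then have "2 * \<mu> \<in> \<real>"
    by auto
  then show "\<mu> \<in> \<real>"
    by (metis Reals_divide Reals_numeral nonzero_mult_div_cancel_left zero_neq_numeral)
qed

lemma eigenvalues_mat2_nonreal:
  assumes "mat2_discr a b c d < 0"
  shows "\<exists>\<mu>\<in>eigenvalues (mat2 a b c d). \<mu> \<notin> \<real>"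
proof
  define t where "t = sqrt (- mat2_discr a b c d)"
  have "t > 0" "t^2 = - mat2_discr a b c d"
    using assms by (simp_all add: t_def)
  let ?\<mu> = "of_real ((a + d) / 2) + \<i> * of_real (t / 2)"
  have "(2 * ?\<mu> - of_real (a + d))^2 = (\<i> * of_real t)^2"
    by (simp add: complex_eq_iff field_simps)
  also have "\<dots> = of_real (mat2_discr a b c d)"
    using \<open>t^2 = _\<close> by (simp add: power_mult_distrib flip: of_real_power)
  finally show "?\<mu> \<in> eigenvalues (mat2 a b c d)"
    by (simp only: eigenvalues_mat2_iff)
  show "?\<mu> \<notin> \<real>"
    using \<open>t > 0\<close> by (simp add: complex_is_Real_iff)
qed

text \<open>The rows of the conjugating matrix are left eigenvectors; which of the two candidate
  rows \<open>(c, l - a)\<close> and \<open>(l - d, b)\<close> is nonzero depends on which off-diagonal entry vanishes.\<close>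
lemma mat2_diagonalizable:
  assumes "mat2_discr a b c d > 0"
  shows "\<exists>T l1 l2. invertible T \<and> T ** mat2 a b c d = mat2 l1 0 0 l2 ** T"
proof -
  define r where "r = sqrt (mat2_discr a b c d)"
  have "r > 0" "r^2 = (a - d)^2 + 4*b*c"
    using assms by (simp_all add: r_def mat2_discr_def)
  define l1 where "l1 = (a + d + r) / 2"
  define l2 where "l2 = (a + d - r) / 2"
  have eig: "(l1 - a) * (l1 - d) = b*c" "(l2 - a) * (l2 - d) = b*c"
    using \<open>r^2 = _\<close> by (simp_all add: l1_def l2_def field_simps power2_eq_square)
  have "l1 \<noteq> l2"
    using \<open>r > 0\<close> by (simp add: l1_def l2_def)
  consider "c \<noteq> 0" | "c = 0" "b \<noteq> 0" | "c = 0" "b = 0"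
    by blast
  then show ?thesis
  proof cases
    case 1
    have "invertible (mat2 c (l1 - a) c (l2 - a))"
      using 1 \<open>l1 \<noteq> l2\<close> by (simp add: invertible_mat2_iff algebra_simps)
    moreover have "mat2 c (l1 - a) c (l2 - a) ** mat2 a b c d = mat2 l1 0 0 l2 ** mat2 c (l1 - a) c (l2 - a)"
      using eig by (simp add: mat2_eq_iff algebra_simps)
    ultimately show ?thesis by blast
  next
    case 2
    have "invertible (mat2 (l1 - d) b (l2 - d) b)"
      using 2 \<open>l1 \<noteq> l2\<close> by (simp add: invertible_mat2_iff algebra_simps)
    moreover have "mat2 (l1 - d) b (l2 - d) b ** mat2 a b c d = mat2 l1 0 0 l2 ** mat2 (l1 - d) b (l2 - d) b"
      using eig 2 by (simp add: mat2_eq_iff algebra_simps)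
    ultimately show ?thesis by blast
  next
    case 3
    have "mat 1 ** mat2 a b c d = mat2 a 0 0 d ** mat 1"
      using 3 by simp
    then show ?thesis
      using invertible_mat_1 by blast
  qed
qed

lemma mat2_rotation_similar:
  assumes "mat2_discr a b c d < 0"
  shows "\<exists>T s t. invertible T \<and> T ** mat2 a b c d = mat2 s (- t) t s ** T"
proof -
  define t where "t = sqrt (- mat2_discr a b c d) / 2"
  have "t > 0" "4 * t^2 = - ((a - d)^2 + 4*b*c)"
    using assms by (simp_all add: t_def mat2_discr_def power_divide)
  have "c \<noteq> 0"
    using assms by (auto simp: mat2_discr_def)
  let ?T = "mat2 c ((d - a) / 2) 0 t"
  have "invertible ?T"
    using \<open>c \<noteq> 0\<close> \<open>t > 0\<close> by (simp add: invertible_mat2_iff)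
  moreover have "?T ** mat2 a b c d = mat2 ((a + d) / 2) (- t) t ((a + d) / 2) ** ?T"
    using \<open>4 * t^2 = _\<close> by (simp add: mat2_eq_iff field_simps power2_eq_square)
  ultimately show ?thesis by blast
qed

lemma det_commutator_diagonal:
  "det (commutator (mat2 l1 0 0 l2) (mat2 p q u v)) = (l1 - l2)^2 * (q * u)"
  by (simp add: commutator_def power2_eq_square algebra_simps)

lemma diagonal_scaling_intertwine:
  assumes "x \<noteq> 0"
  shows "mat2 x 0 0 1 ** mat2 p q u v = mat2 p (x * q) (u / x) v ** mat2 x 0 0 1"
    and "mat2 x 0 0 1 ** mat2 l1 0 0 l2 = mat2 l1 0 0 l2 ** mat2 x 0 0 1"
  using assms by (simp_all add: mat2_eq_iff)

lemma balancing_scale_exists: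
  fixes q u :: real
  assumes "q \<noteq> 0" "u \<noteq> 0"
  obtains x where "x > 0" "x * q = u / x \<or> x * q = - (u / x)"
proof
  define x where "x = sqrt (\<bar>u\<bar> / \<bar>q\<bar>)"
  show "x > 0"
    using assms by (simp add: x_def)
  have "\<bar>x * q\<bar> = \<bar>u / x\<bar>"
    using assms \<open>x > 0\<close>
    by (simp add: x_def abs_mult real_sqrt_divide field_simps real_sqrt_abs2 flip: real_sqrt_mult)
  then show "x * q = u / x \<or> x * q = - (u / x)"
    by (rule abs_eq_iff[THEN iffD1])
qed

lemma simultaneous_normal_form_real:
  assumes "mat2_discr a b c d > 0" and "det (commutator (mat2 a b c d) B) \<noteq> 0"
  shows "\<exists>T. invertible T \<and> (\<exists>l1 l2 s21 s22 t2. T ** mat2 a b c d ** matrix_inv T = mat2 l1 0 0 l2 \<and>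
    (T ** B ** matrix_inv T = mat2 s21 t2 t2 s22 \<or> T ** B ** matrix_inv T = mat2 s21 (- t2) t2 s22))"
proof -
  obtain T1 l1 l2 where T1: "invertible T1" "T1 ** mat2 a b c d = mat2 l1 0 0 l2 ** T1"
    using mat2_diagonalizable[OF assms(1)] by blast
  obtain p q u v where "T1 ** B ** matrix_inv T1 = mat2 p q u v"
    by (rule mat2_cases)
  then have T1B: "T1 ** B = mat2 p q u v ** T1"
    using conjugate_eq_iff[OF T1(1)] by blast
  have "det (commutator (mat2 a b c d) B) = (l1 - l2)^2 * (q * u)"
    using det_intertwine[OF T1(1) commutator_intertwine[OF T1(2) T1B]]
    by (simp only: det_commutator_diagonal)
  then have "q \<noteq> 0" "u \<noteq> 0"
    using assms(2) by auto
  then obtain x where "x > 0" and balanced: "x * q = u / x \<or> x * q = - (u / x)"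
    by (rule balancing_scale_exists)
  have "invertible (mat2 x 0 0 1)"
    using \<open>x > 0\<close> by (simp add: invertible_mat2_iff)
  from conjugate_pair_compose[OF T1(1) this T1(2) T1B
      diagonal_scaling_intertwine(2,1)[OF \<open>x > 0\<close>[THEN less_imp_neq, symmetric]]]
  show ?thesis
    using balanced by metis
qed

lemma rotation_commuting_normal_form:
  obtains T s21 s22 t2 where "invertible T"
    and "T ** mat2 s (- t) t s = mat2 s (- t) t s ** T"
    and "T ** mat2 p q u v = mat2 s21 (- t2) t2 s22 ** T"
proof (cases "q + u = 0")
  case True
  have "mat 1 ** mat2 p q u v = mat2 p (- u) u v ** mat 1"
    using True by (simp add: mat2_eq_iff)
  then show ?thesis
    by (rule that[OF invertible_mat_1, rotated]) simp
next
  case False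
  define u0 where "u0 = (p - v) / 2"
  define v0 where "v0 = (q + u) / 2"
  define m where "m = (p + v) / 2"
  define n where "n = (u - q) / 2"
  define \<rho> where "\<rho> = sqrt (u0^2 + v0^2)"
  have \<rho>: "\<rho> * \<rho> = u0 * u0 + v0 * v0"
    by (simp add: \<rho>_def power2_eq_square)
  text \<open>With \<open>p q u v\<close> written as \<open>m I + n J + u0 \<sigma>\<^sub>z + v0 \<sigma>\<^sub>x\<close>, the vector \<open>(\<rho> + u0, v0)\<close> bisects
    the angle of \<open>(u0, v0)\<close>, so conjugating by \<open>T = (\<rho> + u0) I - v0 J\<close> turns the symmetric
    traceless part into \<open>\<rho> \<sigma>\<^sub>z\<close>. This T is singular when \<open>v0 = 0 \<and> u0 \<le> 0\<close>, hence the case split.\<close>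
  let ?T = "mat2 (\<rho> + u0) v0 (- v0) (\<rho> + u0)"
  have "v0 \<noteq> 0"
    using False by (simp add: v0_def)
  then have "invertible ?T"
    by (simp add: invertible_mat2_iff add_nonneg_pos flip: power2_eq_square)
  moreover have "?T ** mat2 s (- t) t s = mat2 s (- t) t s ** ?T"
    by (simp add: mat2_eq_iff algebra_simps)
  moreover have "?T ** mat2 p q u v = mat2 (m + \<rho>) (- n) n (m - \<rho>) ** ?T"
  proof -
    have entries: "p = m + u0" "v = m - u0" "q = v0 - n" "u = v0 + n"
      by (simp_all add: u0_def v0_def m_def n_def field_simps)
    show ?thesis
      unfolding entries using \<rho> by (simp add: mat2_eq_iff algebra_simps)
  qed
  ultimately show ?thesis
    using that by blast
qed

lemma simultaneous_normal_form_nonreal: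
  assumes "mat2_discr a b c d < 0"
  shows "\<exists>T. invertible T \<and> (\<exists>s1 t1 s21 s22 t2. T ** mat2 a b c d ** matrix_inv T = mat2 s1 (- t1) t1 s1 \<and>
    T ** B ** matrix_inv T = mat2 s21 (- t2) t2 s22)"
proof -
  obtain T1 s t where T1: "invertible T1" "T1 ** mat2 a b c d = mat2 s (- t) t s ** T1"
    using mat2_rotation_similar[OF assms] by blast
  obtain p q u v where "T1 ** B ** matrix_inv T1 = mat2 p q u v"
    by (rule mat2_cases)
  then have T1B: "T1 ** B = mat2 p q u v ** T1"
    using conjugate_eq_iff[OF T1(1)] by blast
  obtain T2 s21 s22 t2 where "invertible T2" "T2 ** mat2 s (- t) t s = mat2 s (- t) t s ** T2"
    "T2 ** mat2 p q u v = mat2 s21 (- t2) t2 s22 ** T2"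
    by (rule rotation_commuting_normal_form)
  from conjugate_pair_compose[OF T1(1) this(1) T1(2) T1B this(2,3)] show ?thesis
    by blast
qed

theorem lemma2p10:
  fixes A1 A2 :: "real^2^2"
  assumes "card (eigenvalues A1) = 2"
  shows "\<exists>T :: real^2^2. invertible T \<and>
    ((eigenvalues A1 \<subseteq> \<real> \<and> det (commutator A1 A2) \<noteq> 0) \<longrightarrow>
       (\<exists>l1 l2 s21 s22 t2. T ** A1 ** matrix_inv T = mat2 l1 0 0 l2 \<and>
          (T ** A2 ** matrix_inv T = mat2 s21 t2 t2 s22 \<or>
           T ** A2 ** matrix_inv T = mat2 s21 (- t2) t2 s22))) \<and>
    ((\<exists>\<mu>\<in>eigenvalues A1. \<mu> \<notin> \<real>) \<longrightarrow>
       (\<exists>s1 t1 s21 s22 t2. T ** A1 ** matrix_inv T = mat2 s1 (- t1) t1 s1 \<and>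
          T ** A2 ** matrix_inv T = mat2 s21 (- t2) t2 s22))"
proof -
  obtain a b c d where A1: "A1 = mat2 a b c d"
    by (rule mat2_cases)
  consider "mat2_discr a b c d = 0" | "mat2_discr a b c d > 0" | "mat2_discr a b c d < 0"
    by linarith
  then show ?thesis
  proof cases
    case 1
    then have "card (eigenvalues A1) = 1"
      by (simp add: A1 eigenvalues_mat2_discr_zero)
    with assms show ?thesis
      by simp
  next
    case 2
    then have real: "eigenvalues A1 \<subseteq> \<real>"
      unfolding A1 by (rule eigenvalues_mat2_real[OF less_imp_le])
    show ?thesis
    proof (cases "det (commutator A1 A2) = 0")
      case True
      then show ?thesis
        using real invertible_mat_1 by blast
    next
      case False
      then show ?thesis
        using real simultaneous_normal_form_real[OF 2, of A2] unfolding A1 by blast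
    qed
  next
    case 3
    then have "\<not> eigenvalues A1 \<subseteq> \<real>"
      unfolding A1 using eigenvalues_mat2_nonreal by blast
    then show ?thesis
      using simultaneous_normal_form_nonreal[OF 3, of A2] unfolding A1 by blast
  qed
qed

end
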